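(* Let $f\in\mathcal{S}(\mathbb{R})$ and let $(\xi_x)_{x\in\mathbb{Z}}$ be i.i.d. real random variables whose characteristic function $\varphi(t)=\mathbb{E}[e^{2\pi\mathbf{i}t\xi_0}]$ satisfies $1-\varphi(x)\sim c|x|^\alpha$ as $|x|\to0$, with $c>0$ and $\alpha\in(1,2]$. Let $\gamma>1$ and $\beta$ with $1<\beta<\alpha$. Then there exists $C<\infty$ such that for all $r$ with $r^\gamma>2$, $$r^{\frac{\alpha-1}{\alpha}}\,\mathbb{E}\left[\left|\sum_{x\in\mathbb{Z},\,|x|>r^\gamma}f\left(\tfrac{x+\xi_x}{r}\right)\right|\right]\le C\,\frac{r^{(\alpha-1)/\alpha}}{r^{\gamma(\beta-1)}}.$$
   Context: $\mathcal{S}(\mathbb{R})$ is the Schwartz space. *)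

theory Defs
  imports "HOL-Probability.Probability" "HOL-Library.Landau_Symbols"
begin

definition vderiv :: "(real \<Rightarrow> complex) \<Rightarrow> real \<Rightarrow> complex" where
  "vderiv g x = vector_derivative g (at x)"

definition schwartz :: "(real \<Rightarrow> complex) \<Rightarrow> bool" where
  "schwartz f \<longleftrightarrow>
     (\<forall>k x. ((vderiv ^^ k) f) differentiable (at x)) \<and>
     (\<forall>m k. \<exists>B. \<forall>x. \<bar>x\<bar> ^ m * norm (((vderiv ^^ k) f) x) \<le> B)"

end

theory Submission
  imports Defs
begin

(* Via the truncation inequality P(|X| >= 1/u) <= (2/u) int_0^u (1 - Re phi(t)) dt, the
   asymptotics of the characteristic function give the tail bound P(|X| >= s) = O(s^-alpha).
   For |x| > R = r^gamma, either |xi_x| < |x|/2, and then Schwartz decay gives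
   |f((x + xi_x)/r)| <= B (2r)^m |x|^-m, or |xi_x| >= |x|/2, which has probability
   O(|x|^-alpha).  Summing over |x| > R yields O(r^m R^(1-m) + R^(1-alpha)), which is
   O(R^(1-beta)) as soon as m (gamma - 1) >= gamma beta. *)

lemma norm_infsum_le_nn_integral_count_space:
  fixes h :: "'b \<Rightarrow> complex"
  shows "ennreal (norm (infsum h A)) \<le> (\<integral>\<^sup>+x. ennreal (norm (h x)) \<partial>count_space A)"
proof (cases "h summable_on A")
  case True
  then have "Infinite_Set_Sum.abs_summable_on h A"
    using summable_on_iff_abs_summable_on_complex abs_summable_equivalent by blast
  then have int: "integrable (count_space A) h" and eq: "infsum h A = integral\<^sup>L (count_space A) h"
    by (simp_all add: abs_summable_on_def infsetsum_infsum[symmetric] infsetsum_def)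
  have "norm (infsum h A) \<le> integral\<^sup>L (count_space A) (\<lambda>x. norm (h x))"
    unfolding eq by (rule integral_norm_bound)
  also have "ennreal \<dots> = (\<integral>\<^sup>+x. ennreal (norm (h x)) \<partial>count_space A)"
    using int by (subst nn_integral_eq_integral) auto
  finally show ?thesis by (simp add: ennreal_leI)
qed (simp add: infsum_not_exists)

lemma tangent_le_powr_diff:
  fixes n s :: real
  assumes "n > 1" "s > 1"
  shows "(s - 1) * n powr (-s) \<le> (n - 1) powr (1 - s) - n powr (1 - s)"
proof -
  define h where "h = 1 / n"
  have h: "0 < h" "h < 1" using assms by (auto simp: h_def)
  have "1 + (s - 1) * h \<le> 1 - (s - 1) * ln (1 - h)"
    using assms h ln_le_minus_one[of "1 - h"] mult_left_mono[of h "- ln (1 - h)" "s - 1"] by simp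
  also have "\<dots> \<le> exp (- (s - 1) * ln (1 - h))"
    using exp_ge_add_one_self[of "- (s - 1) * ln (1 - h)"] by (simp add: algebra_simps)
  also have "\<dots> = (1 - h) powr (1 - s)" using h by (simp add: powr_def)
  finally have "n powr (1 - s) * (1 + (s - 1) * h) \<le> n powr (1 - s) * (1 - h) powr (1 - s)"
    by (intro mult_left_mono) auto
  moreover have "n powr (1 - s) * (1 + (s - 1) * h) = n powr (1 - s) + (s - 1) * n powr (-s)"
    using assms by (simp add: h_def powr_diff powr_minus field_simps)
  moreover have "n powr (1 - s) * (1 - h) powr (1 - s) = (n - 1) powr (1 - s)"
  proof -
    have "n * (1 - h) = n - 1" using assms by (simp add: h_def field_simps)
    then show ?thesis using assms h by (simp add: powr_mult[symmetric])
  qed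
  ultimately show ?thesis by linarith
qed

lemma nn_integral_powr_nat_tail:
  fixes s :: real
  assumes "s > 1" "N \<ge> 2"
  shows "(\<integral>\<^sup>+n. ennreal (real n powr (-s)) \<partial>count_space {N..})
           \<le> ennreal (real (N - 1) powr (1 - s) / (s - 1))"
proof -
  define g where "g k = real (k + N - 1) powr (1 - s) / (s - 1)" for k
  have "(\<integral>\<^sup>+n. ennreal (real n powr (-s)) \<partial>count_space {N..})
      = (\<integral>\<^sup>+k. ennreal (real (k + N) powr (-s)) \<partial>count_space UNIV)"
  proof (rule nn_integral_bij_count_space[symmetric])
    have "n \<in> range (\<lambda>k. k + N)" if "N \<le> n" for n
      using that by (intro range_eqI[of _ _ "n - N"]) simp
    then show "bij_betw (\<lambda>k. k + N) UNIV {N..}" by (auto simp: bij_betw_def)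
  qed
  also have "\<dots> = (\<Sum>k. ennreal (real (k + N) powr (-s)))"
    by (rule nn_integral_count_space_nat)
  also have "\<dots> \<le> ennreal (g 0)"
  proof (rule suminf_le_const)
    fix m
    have "(\<Sum>k<m. ennreal (real (k + N) powr (-s))) = ennreal (\<Sum>k<m. real (k + N) powr (-s))"
      by (rule sum_ennreal) simp
    also have "(\<Sum>k<m. real (k + N) powr (-s)) \<le> (\<Sum>k<m. g k - g (Suc k))"
    proof (rule sum_mono)
      fix k
      have "(s - 1) * real (k + N) powr (-s) \<le> (real (k + N) - 1) powr (1 - s) - real (k + N) powr (1 - s)"
        using assms by (intro tangent_le_powr_diff) auto
      then show "real (k + N) powr (-s) \<le> g k - g (Suc k)"
        using assms
        by (simp add: g_def of_nat_diff diff_divide_distrib[symmetric] pos_le_divide_eq mult.commute)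
    qed
    also have "\<dots> \<le> g 0"
      unfolding sum_lessThan_telescope' using assms by (simp add: g_def)
    finally show "(\<Sum>k<m. ennreal (real (k + N) powr (-s))) \<le> ennreal (g 0)"
      by (simp add: ennreal_leI)
  qed simp
  finally show ?thesis by (simp add: g_def)
qed

lemma nn_integral_count_space_int_abs_le:
  fixes g :: "nat \<Rightarrow> ennreal"
  shows "(\<integral>\<^sup>+x. g (nat \<bar>x\<bar>) \<partial>count_space {x::int. nat \<bar>x\<bar> \<in> A}) \<le> 2 * (\<integral>\<^sup>+n. g n \<partial>count_space A)"
proof -
  have reindex: "(\<integral>\<^sup>+x. g (nat \<bar>x\<bar>) * indicator (h ` A) x \<partial>count_space UNIV) = (\<integral>\<^sup>+n. g n \<partial>count_space A)"
    if "inj h" "\<And>n. nat \<bar>h n\<bar> = n" for h :: "nat \<Rightarrow> int"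
  proof -
    have "(\<integral>\<^sup>+x. g (nat \<bar>x\<bar>) * indicator (h ` A) x \<partial>count_space UNIV)
        = (\<integral>\<^sup>+x. g (nat \<bar>x\<bar>) \<partial>count_space (h ` A))"
      by (simp add: nn_integral_count_space_indicator)
    also have "\<dots> = (\<integral>\<^sup>+n. g (nat \<bar>h n\<bar>) \<partial>count_space A)"
      using that(1)
      by (intro nn_integral_bij_count_space[symmetric]) (simp add: bij_betw_def inj_on_def inj_def)
    finally show ?thesis using that(2) by simp
  qed
  have "(\<integral>\<^sup>+x. g (nat \<bar>x\<bar>) \<partial>count_space {x::int. nat \<bar>x\<bar> \<in> A})
      = (\<integral>\<^sup>+x. g (nat \<bar>x\<bar>) * indicator {x::int. nat \<bar>x\<bar> \<in> A} x \<partial>count_space UNIV)"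
    by (simp add: nn_integral_count_space_indicator)
  also have "\<dots> \<le> (\<integral>\<^sup>+x. g (nat \<bar>x\<bar>) * indicator (int ` A) x
                         + g (nat \<bar>x\<bar>) * indicator ((\<lambda>n. - int n) ` A) x \<partial>count_space UNIV)"
  proof (rule nn_integral_mono)
    fix x :: int
    have "x \<in> int ` A \<or> x \<in> (\<lambda>n. - int n) ` A" if "nat \<bar>x\<bar> \<in> A"
      using that by (cases "x \<ge> 0") (auto intro: image_eqI[of _ _ "nat \<bar>x\<bar>"])
    then show "g (nat \<bar>x\<bar>) * indicator {x::int. nat \<bar>x\<bar> \<in> A} x
        \<le> g (nat \<bar>x\<bar>) * indicator (int ` A) x + g (nat \<bar>x\<bar>) * indicator ((\<lambda>n. - int n) ` A) x"
      by (auto simp: indicator_def)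
  qed
  also have "\<dots> = 2 * (\<integral>\<^sup>+n. g n \<partial>count_space A)"
    by (simp add: nn_integral_add reindex inj_def mult_2)
  finally show ?thesis .
qed

lemma nn_integral_powr_int_tail:
  fixes s R :: real
  assumes "s > 1" "R \<ge> 2"
  shows "(\<integral>\<^sup>+x. ennreal (\<bar>real_of_int x\<bar> powr (-s)) \<partial>count_space {x::int. \<bar>real_of_int x\<bar> > R})
           \<le> ennreal (2 powr s / (s - 1) * R powr (1 - s))"
proof -
  define N where "N = nat \<lfloor>R\<rfloor> + 1"
  have N: "N \<ge> 2" using assms by (simp add: N_def le_nat_iff)
  have "{x::int. \<bar>real_of_int x\<bar> > R} = {x. nat \<bar>x\<bar> \<in> {N..}}"
    using assms by (auto simp: N_def floor_less_iff) linarith+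
  then have "(\<integral>\<^sup>+x. ennreal (\<bar>real_of_int x\<bar> powr (-s)) \<partial>count_space {x::int. \<bar>real_of_int x\<bar> > R})
      = (\<integral>\<^sup>+x. ennreal (real (nat \<bar>x\<bar>) powr (-s)) \<partial>count_space {x. nat \<bar>x\<bar> \<in> {N..}})"
    by simp
  also have "\<dots> \<le> 2 * (\<integral>\<^sup>+n. ennreal (real n powr (-s)) \<partial>count_space {N..})"
    by (rule nn_integral_count_space_int_abs_le)
  also have "\<dots> \<le> 2 * ennreal (real (N - 1) powr (1 - s) / (s - 1))"
    using assms(1) N by (intro mult_left_mono nn_integral_powr_nat_tail) auto
  also have "\<dots> \<le> ennreal (2 powr s / (s - 1) * R powr (1 - s))"
  proof -
    have "R / 2 \<le> real (N - 1)" using assms by (simp add: N_def) linarith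
    then have "real (N - 1) powr (1 - s) \<le> (R / 2) powr (1 - s)"
      using assms by (intro powr_mono2') auto
    also have "(R / 2) powr (1 - s) = 2 powr s / 2 * R powr (1 - s)"
      using assms by (simp add: powr_divide powr_diff)
    finally have "2 * real (N - 1) powr (1 - s) \<le> 2 powr s * R powr (1 - s)"
      by simp
    from divide_right_mono[OF this, of "s - 1"]
    have "2 * (real (N - 1) powr (1 - s) / (s - 1)) \<le> 2 powr s / (s - 1) * R powr (1 - s)"
      using assms by simp
    then show ?thesis by (metis ennreal_leI ennreal_mult' ennreal_numeral zero_le_numeral)
  qed
  finally show ?thesis .
qed

lemma nn_integral_one_minus_cos_ge:
  fixes u y :: real
  assumes u: "u > 0" and y: "1 / u \<le> \<bar>y\<bar>"
  shows "ennreal (u / 2) \<le> (\<integral>\<^sup>+t. ennreal (indicator {0..u} t * (1 - cos (2 * pi * t * y))) \<partial>lborel)"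
proof -
  have y0: "y \<noteq> 0" using u y by auto
  define F where "F t = t - sin (2 * pi * t * y) / (2 * pi * y)" for t
  have "(F has_real_derivative 1 - cos (2 * pi * t * y)) (at t within {0..u})" for t
    unfolding F_def using y0 by (auto intro!: derivative_eq_intros)
  then have "((\<lambda>t. 1 - cos (2 * pi * t * y)) has_integral (F u - F 0)) {0..u}"
    using u by (intro fundamental_theorem_of_calculus)
      (auto simp: has_real_derivative_iff_has_vector_derivative)
  then have "(\<integral>\<^sup>+t. ennreal (indicator {0..u} t * (1 - cos (2 * pi * t * y))) \<partial>lborel) = ennreal (F u - F 0)"
    by (intro nn_integral_has_integral_lebesgue) auto
  moreover have "u / 2 \<le> F u - F 0"
  proof -
    have "\<bar>sin (2 * pi * u * y) / (2 * pi * y)\<bar> \<le> 1 / (2 * pi * \<bar>y\<bar>)"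
      using y0 by (simp add: abs_divide abs_mult divide_right_mono)
    also have "\<dots> \<le> u / (2 * pi)"
      using y u y0 by (simp add: divide_simps) (simp add: mult.commute)
    also have "\<dots> \<le> u / 2" using u pi_gt3 by (intro divide_left_mono) auto
    finally have "\<bar>sin (2 * pi * u * y) / (2 * pi * y)\<bar> \<le> u / 2" .
    moreover have "F u - F 0 = u - sin (2 * pi * u * y) / (2 * pi * y)" by (simp add: F_def)
    ultimately show ?thesis by linarith
  qed
  ultimately show ?thesis by (simp add: ennreal_leI)
qed

lemma (in prob_space) truncation_inequality:
  fixes X :: "'a \<Rightarrow> real"
  assumes X[measurable]: "X \<in> borel_measurable M" and u: "u > 0"
    and bound: "\<And>t. 0 \<le> t \<Longrightarrow> t \<le> u \<Longrightarrow> (\<integral>\<omega>. 1 - cos (2 * pi * t * X \<omega>) \<partial>M) \<le> D"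
  shows "prob {\<omega>\<in>space M. 1 / u \<le> \<bar>X \<omega>\<bar>} \<le> 2 * D"
proof -
  interpret pair_sigma_finite lborel M ..
  define Q where "Q = {\<omega>\<in>space M. 1 / u \<le> \<bar>X \<omega>\<bar>}"
  have [measurable]: "Q \<in> events" unfolding Q_def by measurable
  have D: "0 \<le> D" using bound[of 0] u by simp
  have "ennreal (u / 2) * emeasure M Q = (\<integral>\<^sup>+\<omega>. ennreal (u / 2) * indicator Q \<omega> \<partial>M)"
    by (simp add: nn_integral_cmult_indicator)
  also have "\<dots> \<le> (\<integral>\<^sup>+\<omega>. (\<integral>\<^sup>+t. ennreal (indicator {0..u} t * (1 - cos (2 * pi * t * X \<omega>))) \<partial>lborel) \<partial>M)"
    using nn_integral_one_minus_cos_ge[OF u] by (intro nn_integral_mono) (auto simp: Q_def indicator_def)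
  also have "\<dots> = (\<integral>\<^sup>+t. (\<integral>\<^sup>+\<omega>. ennreal (indicator {0..u} t * (1 - cos (2 * pi * t * X \<omega>))) \<partial>M) \<partial>lborel)"
    by (rule Fubini') measurable
  also have "\<dots> \<le> (\<integral>\<^sup>+t. ennreal D * indicator {0..u} t \<partial>lborel)"
  proof (rule nn_integral_mono)
    fix t :: real
    have "integrable M (\<lambda>\<omega>. 1 - cos (2 * pi * t * X \<omega>))"
      by (intro integrable_const_bound[where B=2]) (auto simp: abs_le_iff)
    then have "(\<integral>\<^sup>+\<omega>. ennreal (1 - cos (2 * pi * t * X \<omega>)) \<partial>M) = ennreal (\<integral>\<omega>. 1 - cos (2 * pi * t * X \<omega>) \<partial>M)"
      by (intro nn_integral_eq_integral) auto
    then show "(\<integral>\<^sup>+\<omega>. ennreal (indicator {0..u} t * (1 - cos (2 * pi * t * X \<omega>))) \<partial>M)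
        \<le> ennreal D * indicator {0..u} t"
      using bound by (auto simp: indicator_def intro!: ennreal_leI)
  qed
  also have "\<dots> = ennreal (D * u)" using u D by (simp add: nn_integral_cmult_indicator ennreal_mult)
  finally have "ennreal (u / 2) * ennreal (prob Q) \<le> ennreal (D * u)"
    by (simp add: emeasure_eq_measure)
  then have "u / 2 * prob Q \<le> D * u" using u D by (simp add: ennreal_mult[symmetric] ennreal_le_iff)
  then show ?thesis using u by (simp add: Q_def field_simps)
qed

lemma (in prob_space) integral_one_minus_cos_eq_Re:
  fixes X :: "'a \<Rightarrow> real"
  assumes [measurable]: "X \<in> borel_measurable M"
  shows "(\<integral>\<omega>. 1 - cos (2 * pi * t * X \<omega>) \<partial>M) = Re (1 - (\<integral>\<omega>. cis (2 * pi * t * X \<omega>) \<partial>M))"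
proof -
  have "integrable M (\<lambda>\<omega>. cis (2 * pi * t * X \<omega>))"
    by (intro integrable_const_bound[where B=1]) (auto simp: cis_conv_exp)
  then have "Re (\<integral>\<omega>. cis (2 * pi * t * X \<omega>) \<partial>M) = (\<integral>\<omega>. cos (2 * pi * t * X \<omega>) \<partial>M)"
    by (simp flip: integral_Re)
  moreover have "integrable M (\<lambda>\<omega>. cos (2 * pi * t * X \<omega>))"
    by (intro integrable_const_bound[where B=1]) auto
  ultimately show ?thesis by (simp add: prob_space)
qed

lemma (in prob_space) tail_bound_of_char_asymp:
  fixes X :: "'a \<Rightarrow> real"
  assumes X[measurable]: "X \<in> borel_measurable M" and "\<alpha> > 0" "c > 0"
    and "(\<lambda>t. 1 - (\<integral>\<omega>. cis (2 * pi * t * X \<omega>) \<partial>M)) \<sim>[at 0] (\<lambda>t. complex_of_real (c * \<bar>t\<bar> powr \<alpha>))"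
  shows "\<exists>A\<ge>0. \<forall>s>0. prob {\<omega>\<in>space M. s \<le> \<bar>X \<omega>\<bar>} \<le> A * s powr (-\<alpha>)"
proof -
  obtain K where K: "K > 0"
    and "eventually (\<lambda>t. norm (1 - (\<integral>\<omega>. cis (2 * pi * t * X \<omega>) \<partial>M))
                          \<le> K * norm (complex_of_real (c * \<bar>t\<bar> powr \<alpha>))) (at 0)"
    using asymp_equiv_imp_bigo[OF assms(4)] by (rule landau_o.bigE)
  then obtain d where d: "d > 0"
    and near0: "\<And>t. t \<noteq> 0 \<Longrightarrow> \<bar>t\<bar> < d \<Longrightarrow> norm (1 - (\<integral>\<omega>. cis (2 * pi * t * X \<omega>) \<partial>M)) \<le> K * (c * \<bar>t\<bar> powr \<alpha>)"
    using \<open>c > 0\<close> unfolding eventually_at by (auto simp: dist_real_def norm_mult)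
  have small_s: "prob {\<omega>\<in>space M. 1 / u \<le> \<bar>X \<omega>\<bar>} \<le> 2 * (K * c * u powr \<alpha>)" if u: "0 < u" "u < d" for u
  proof (rule truncation_inequality[OF X \<open>0 < u\<close>])
    fix t :: real assume t: "0 \<le> t" "t \<le> u"
    show "(\<integral>\<omega>. 1 - cos (2 * pi * t * X \<omega>) \<partial>M) \<le> K * c * u powr \<alpha>"
    proof (cases "t = 0")
      case False
      have "(\<integral>\<omega>. 1 - cos (2 * pi * t * X \<omega>) \<partial>M) \<le> norm (1 - (\<integral>\<omega>. cis (2 * pi * t * X \<omega>) \<partial>M))"
        unfolding integral_one_minus_cos_eq_Re[OF X] by (rule complex_Re_le_cmod)
      also have "\<dots> \<le> K * c * t powr \<alpha>" using False t u near0[of t] by simp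
      also have "\<dots> \<le> K * c * u powr \<alpha>" using K \<open>c > 0\<close> t \<open>\<alpha> > 0\<close> by (intro mult_left_mono powr_mono2) auto
      finally show ?thesis .
    qed (use K \<open>c > 0\<close> in simp)
  qed
  define A where "A = 2 * K * c + d powr (-\<alpha>)"
  have "prob {\<omega>\<in>space M. s \<le> \<bar>X \<omega>\<bar>} \<le> A * s powr (-\<alpha>)" if s: "s > 0" for s
  proof (cases "1 / s < d")
    case True
    then have "prob {\<omega>\<in>space M. s \<le> \<bar>X \<omega>\<bar>} \<le> 2 * (K * c * (1 / s) powr \<alpha>)"
      using small_s[of "1 / s"] s by simp
    also have "\<dots> = 2 * K * c * s powr (-\<alpha>)" using s by (simp add: powr_divide powr_minus_divide)
    also have "\<dots> \<le> A * s powr (-\<alpha>)" by (simp add: A_def distrib_right)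
    finally show ?thesis .
  next
    case False
    have "prob {\<omega>\<in>space M. s \<le> \<bar>X \<omega>\<bar>} \<le> 1" by (rule prob_le_1)
    also have "1 \<le> (1 / (d * s)) powr \<alpha>"
      using False s d \<open>\<alpha> > 0\<close> by (intro ge_one_powr_ge_zero) (auto simp: field_simps)
    also have "\<dots> = d powr (-\<alpha>) * s powr (-\<alpha>)"
      using s d by (simp add: powr_divide powr_mult powr_minus_divide)
    also have "\<dots> \<le> A * s powr (-\<alpha>)" using K \<open>c > 0\<close> by (intro mult_right_mono) (auto simp: A_def)
    finally show ?thesis .
  qed
  moreover have "A \<ge> 0" using K \<open>c > 0\<close> by (simp add: A_def)
  ultimately show ?thesis by blast
qed

lemma (in prob_space) prob_eq_of_distr_eq:
  assumes "X \<in> borel_measurable M" "Y \<in> borel_measurable M"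
    and "distr M borel X = distr M borel Y" and "S \<in> sets borel"
  shows "prob {\<omega>\<in>space M. X \<omega> \<in> S} = prob {\<omega>\<in>space M. Y \<omega> \<in> S}"
proof -
  have "prob {\<omega>\<in>space M. Z \<omega> \<in> S} = measure (distr M borel Z) S" if "Z \<in> borel_measurable M" for Z
    using that \<open>S \<in> sets borel\<close> by (simp add: measure_distr vimage_def Int_def conj_commute)
  then show ?thesis using assms by metis
qed

lemma decay_bound_nonneg:
  fixes f :: "real \<Rightarrow> 'b::real_normed_vector"
  assumes "\<And>y. \<bar>y\<bar> ^ m * norm (f y) \<le> B"
  shows "B \<ge> 0"
  by (rule order_trans[OF mult_nonneg_nonneg[OF zero_le_power_abs norm_ge_zero] assms])

lemma schwartz_decay:
  assumes "schwartz f"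
  obtains B where "B \<ge> 0" "\<And>y. \<bar>y\<bar> ^ m * norm (f y) \<le> B"
proof -
  obtain B where "\<And>y. \<bar>y\<bar> ^ m * norm (f y) \<le> B"
    using assms unfolding schwartz_def by (metis funpow_0)
  then show ?thesis using that decay_bound_nonneg by blast
qed

lemma schwartz_borel_measurable:
  assumes "schwartz f"
  shows "f \<in> borel_measurable borel"
proof -
  have "f differentiable (at x)" for x
    using assms unfolding schwartz_def by (metis funpow_0)
  then show ?thesis
    by (intro borel_measurable_continuous_onI continuous_at_imp_continuous_on)
       (auto intro: differentiable_imp_continuous_within)
qed

lemma norm_decaying_at_shift_le:
  fixes f :: "real \<Rightarrow> complex"
  assumes decay: "\<And>y. \<bar>y\<bar> ^ m * norm (f y) \<le> B" and "r > 0" and "\<bar>e\<bar> < \<bar>z\<bar> / 2"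
  shows "norm (f ((z + e) / r)) \<le> B * (2 * r) ^ m * \<bar>z\<bar> powr (- real m)"
proof -
  define y where "y = (z + e) / r"
  have "\<bar>z\<bar> > 0" using assms(3) by linarith
  then have z: "\<bar>z\<bar> / (2 * r) > 0" using assms by auto
  have "\<bar>z + e\<bar> \<ge> \<bar>z\<bar> / 2" using assms(3) by linarith
  then have y: "\<bar>y\<bar> \<ge> \<bar>z\<bar> / (2 * r)" using \<open>r > 0\<close> by (simp add: y_def abs_divide divide_simps)
  have B: "0 \<le> B" using decay by (rule decay_bound_nonneg)
  have "norm (f y) \<le> B / \<bar>y\<bar> ^ m"
    using decay[of y] y z by (simp add: pos_le_divide_eq mult.commute)
  also have "\<dots> \<le> B / (\<bar>z\<bar> / (2 * r)) ^ m"
    using y z B by (intro divide_left_mono power_mono mult_pos_pos zero_less_power) auto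
  also have "\<dots> = B * (2 * r) ^ m * \<bar>z\<bar> powr (- real m)"
    using \<open>\<bar>z\<bar> > 0\<close> \<open>r > 0\<close> by (simp add: powr_minus_divide powr_realpow power_divide)
  finally show ?thesis by (simp add: y_def)
qed

lemma (in prob_space) nn_integral_norm_decaying_at_shift_le:
  fixes f :: "real \<Rightarrow> complex" and Y :: "'a \<Rightarrow> real"
  assumes [measurable]: "Y \<in> borel_measurable M"
    and bounded: "\<And>y. norm (f y) \<le> B\<^sub>0" and decay: "\<And>y. \<bar>y\<bar> ^ m * norm (f y) \<le> B"
    and "r > 0" and tail: "prob {\<omega>\<in>space M. \<bar>z\<bar> / 2 \<le> \<bar>Y \<omega>\<bar>} \<le> T"
  shows "(\<integral>\<^sup>+\<omega>. ennreal (norm (f ((z + Y \<omega>) / r))) \<partial>M)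
           \<le> ennreal (B * (2 * r) ^ m * \<bar>z\<bar> powr (- real m) + B\<^sub>0 * T)"
proof -
  define a where "a = B * (2 * r) ^ m * \<bar>z\<bar> powr (- real m)"
  define S where "S = {\<omega>\<in>space M. \<bar>z\<bar> / 2 \<le> \<bar>Y \<omega>\<bar>}"
  have [measurable]: "S \<in> events" unfolding S_def by measurable
  have "0 \<le> B" using decay by (rule decay_bound_nonneg)
  then have a: "0 \<le> a" using \<open>r > 0\<close> by (simp add: a_def)
  have B\<^sub>0: "0 \<le> B\<^sub>0" using bounded[of 0] norm_ge_zero order_trans by blast
  have T: "0 \<le> T" using tail measure_nonneg order_trans by blast
  have "(\<integral>\<^sup>+\<omega>. ennreal (norm (f ((z + Y \<omega>) / r))) \<partial>M) \<le> (\<integral>\<^sup>+\<omega>. ennreal a + ennreal B\<^sub>0 * indicator S \<omega> \<partial>M)"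
  proof (rule nn_integral_mono)
    fix \<omega> assume "\<omega> \<in> space M"
    then show "ennreal (norm (f ((z + Y \<omega>) / r))) \<le> ennreal a + ennreal B\<^sub>0 * indicator S \<omega>"
      using norm_decaying_at_shift_le[OF decay \<open>r > 0\<close>, of "Y \<omega>" z] bounded[of "(z + Y \<omega>) / r"] a
      by (cases "\<omega> \<in> S") (auto simp: S_def a_def intro!: ennreal_leI add_increasing)
  qed
  also have "\<dots> = ennreal a + ennreal B\<^sub>0 * ennreal (prob S)"
    by (simp add: nn_integral_add nn_integral_cmult_indicator emeasure_eq_measure prob_space)
  also have "\<dots> \<le> ennreal (a + B\<^sub>0 * T)"
    using tail a B\<^sub>0 T
    by (simp add: S_def ennreal_mult[symmetric] ennreal_plus[symmetric] mult_left_mono del: ennreal_plus)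
  finally show ?thesis by (simp add: a_def)
qed

lemma (in prob_space) nn_integral_norm_tail_sum_le:
  fixes f :: "real \<Rightarrow> complex" and \<xi> :: "int \<Rightarrow> 'a \<Rightarrow> real"
  assumes [measurable]: "\<And>x. \<xi> x \<in> borel_measurable M" "f \<in> borel_measurable borel"
    and bounded: "\<And>y. norm (f y) \<le> B\<^sub>0" and decay: "\<And>y. \<bar>y\<bar> ^ m * norm (f y) \<le> B" and "m \<ge> 2"
    and tail: "\<And>x s. s > 0 \<Longrightarrow> prob {\<omega>\<in>space M. s \<le> \<bar>\<xi> x \<omega>\<bar>} \<le> A * s powr (-\<alpha>)"
    and "\<alpha> > 1" and "r > 0" and "R \<ge> 2"
  shows "(\<integral>\<^sup>+\<omega>. ennreal (norm (infsum (\<lambda>x::int. f ((real_of_int x + \<xi> x \<omega>) / r)) {x. \<bar>real_of_int x\<bar> > R})) \<partial>M)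
           \<le> ennreal (B * (2 powr m / (real m - 1)) * (2 * r) ^ m * R powr (1 - real m)
                      + B\<^sub>0 * A * 2 powr \<alpha> * (2 powr \<alpha> / (\<alpha> - 1)) * R powr (1 - \<alpha>))"
proof -
  define I where "I = {x::int. \<bar>real_of_int x\<bar> > R}"
  define a where "a = B * (2 * r) ^ m"
  define b where "b = B\<^sub>0 * A * 2 powr \<alpha>"
  have "0 \<le> B" using decay by (rule decay_bound_nonneg)
  then have a: "0 \<le> a" using \<open>r > 0\<close> by (simp add: a_def)
  have "0 \<le> B\<^sub>0" using bounded[of 0] norm_ge_zero order_trans by blast
  moreover have "0 \<le> A"
    using order_trans[OF measure_nonneg tail[of 1 0]] by simp
  ultimately have b: "0 \<le> b" by (simp add: b_def)
  have "(\<integral>\<^sup>+\<omega>. ennreal (norm (infsum (\<lambda>x. f ((real_of_int x + \<xi> x \<omega>) / r)) I)) \<partial>M)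
      \<le> (\<integral>\<^sup>+\<omega>. (\<integral>\<^sup>+x. ennreal (norm (f ((real_of_int x + \<xi> x \<omega>) / r))) \<partial>count_space I) \<partial>M)"
    by (intro nn_integral_mono norm_infsum_le_nn_integral_count_space)
  also have "\<dots> = (\<integral>\<^sup>+x. (\<integral>\<^sup>+\<omega>. ennreal (norm (f ((real_of_int x + \<xi> x \<omega>) / r))) \<partial>M) \<partial>count_space I)"
    by (rule nn_integral_count_space_nn_integral) auto
  also have "\<dots> \<le> (\<integral>\<^sup>+x. ennreal a * ennreal (\<bar>real_of_int x\<bar> powr (- real m))
                           + ennreal b * ennreal (\<bar>real_of_int x\<bar> powr (-\<alpha>)) \<partial>count_space I)"
  proof (rule nn_integral_mono)
    fix x assume "x \<in> space (count_space I)"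
    then have x: "\<bar>real_of_int x\<bar> > 0" using \<open>R \<ge> 2\<close> by (simp add: I_def)
    have "(\<integral>\<^sup>+\<omega>. ennreal (norm (f ((real_of_int x + \<xi> x \<omega>) / r))) \<partial>M)
        \<le> ennreal (a * \<bar>real_of_int x\<bar> powr (- real m) + B\<^sub>0 * (A * (\<bar>real_of_int x\<bar> / 2) powr (-\<alpha>)))"
      unfolding a_def
      by (rule nn_integral_norm_decaying_at_shift_le[OF _ bounded decay \<open>r > 0\<close> tail]) (use x in auto)
    also have "B\<^sub>0 * (A * (\<bar>real_of_int x\<bar> / 2) powr (-\<alpha>)) = b * \<bar>real_of_int x\<bar> powr (-\<alpha>)"
      by (simp add: b_def powr_divide powr_minus_divide)
    finally show "(\<integral>\<^sup>+\<omega>. ennreal (norm (f ((real_of_int x + \<xi> x \<omega>) / r))) \<partial>M)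
        \<le> ennreal a * ennreal (\<bar>real_of_int x\<bar> powr (- real m))
          + ennreal b * ennreal (\<bar>real_of_int x\<bar> powr (-\<alpha>))"
      using a b by (simp add: ennreal_mult ennreal_plus)
  qed
  also have "\<dots> = ennreal a * (\<integral>\<^sup>+x. ennreal (\<bar>real_of_int x\<bar> powr (- real m)) \<partial>count_space I)
                    + ennreal b * (\<integral>\<^sup>+x. ennreal (\<bar>real_of_int x\<bar> powr (-\<alpha>)) \<partial>count_space I)"
    by (simp add: nn_integral_add nn_integral_cmult)
  also have "\<dots> \<le> ennreal a * ennreal (2 powr m / (real m - 1) * R powr (1 - real m))
                    + ennreal b * ennreal (2 powr \<alpha> / (\<alpha> - 1) * R powr (1 - \<alpha>))"
    unfolding I_def using \<open>m \<ge> 2\<close> \<open>\<alpha> > 1\<close> \<open>R \<ge> 2\<close>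
    by (intro add_mono mult_left_mono nn_integral_powr_int_tail) auto
  also have "\<dots> = ennreal (a * (2 powr m / (real m - 1) * R powr (1 - real m))
                            + b * (2 powr \<alpha> / (\<alpha> - 1) * R powr (1 - \<alpha>)))"
    using a b \<open>m \<ge> 2\<close> \<open>\<alpha> > 1\<close>
    by (simp add: ennreal_mult'[symmetric] ennreal_plus[symmetric] del: ennreal_plus)
  finally show ?thesis by (simp add: I_def a_def b_def ac_simps)
qed

lemma powr_tail_terms_le:
  fixes r a b \<beta> \<gamma> :: real
  assumes "r \<ge> 1" "\<gamma> > 0" "\<gamma> * \<beta> \<le> real m * (\<gamma> - 1)" "\<beta> \<le> \<alpha>" "a \<ge> 0" "b \<ge> 0"
  shows "a * (2 * r) ^ m * (r powr \<gamma>) powr (1 - real m) + b * (r powr \<gamma>) powr (1 - \<alpha>)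
           \<le> (a * 2 ^ m + b) / r powr (\<gamma> * (\<beta> - 1))"
proof -
  have "r ^ m * (r powr \<gamma>) powr (1 - real m) = r powr (real m + \<gamma> * (1 - real m))"
    using assms(1) by (simp add: powr_realpow[symmetric] powr_powr powr_add)
  also have "\<dots> \<le> r powr (\<gamma> * (1 - \<beta>))"
    using assms(1,3) by (intro powr_mono) (auto simp: algebra_simps)
  finally have "a * (2 * r) ^ m * (r powr \<gamma>) powr (1 - real m) \<le> a * 2 ^ m * (r powr \<gamma>) powr (1 - \<beta>)"
    using assms(5) by (simp add: power_mult_distrib powr_powr mult_left_mono mult.assoc)
  moreover have "b * (r powr \<gamma>) powr (1 - \<alpha>) \<le> b * (r powr \<gamma>) powr (1 - \<beta>)"
    using assms by (intro mult_left_mono powr_mono) (auto simp: ge_one_powr_ge_zero)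
  moreover have "(r powr \<gamma>) powr (1 - \<beta>) = 1 / r powr (\<gamma> * (\<beta> - 1))"
    by (simp add: powr_powr powr_minus_divide[symmetric] algebra_simps)
  ultimately show ?thesis by (simp add: add_divide_distrib add_mono)
qed

theorem lemma4p6:
  fixes M :: "'a measure" and \<xi> :: "int \<Rightarrow> 'a \<Rightarrow> real" and f :: "real \<Rightarrow> complex"
    and c \<alpha> \<beta> \<gamma> :: real
  assumes "prob_space M"
    and "schwartz f"
    and "\<And>x. \<xi> x \<in> borel_measurable M"
    and "prob_space.indep_vars M (\<lambda>_. borel) \<xi> UNIV"
    and "\<And>x. distr M borel (\<xi> x) = distr M borel (\<xi> 0)"
    and "c > 0" and "1 < \<alpha>" and "\<alpha> \<le> 2"
    and "(\<lambda>t. 1 - (\<integral>\<omega>. cis (2 * pi * t * \<xi> 0 \<omega>) \<partial>M))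
           \<sim>[at 0] (\<lambda>t. complex_of_real (c * \<bar>t\<bar> powr \<alpha>))"
    and "\<gamma> > 1" and "1 < \<beta>" and "\<beta> < \<alpha>"
  shows "\<exists>C::real. \<forall>r::real. r > 0 \<longrightarrow> r powr \<gamma> > 2 \<longrightarrow>
           ennreal (r powr ((\<alpha> - 1) / \<alpha>)) *
             (\<integral>\<^sup>+ \<omega>. ennreal (norm (infsum (\<lambda>x::int. f ((real_of_int x + \<xi> x \<omega>) / r))
                                       {x. \<bar>real_of_int x\<bar> > r powr \<gamma>})) \<partial>M)
           \<le> ennreal (C * r powr ((\<alpha> - 1) / \<alpha>) / r powr (\<gamma> * (\<beta> - 1)))"
proof -
  interpret prob_space M by fact
  note [measurable] = assms(3) schwartz_borel_measurable[OF assms(2)]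
  define m where "m = nat \<lceil>\<gamma> * \<beta> / (\<gamma> - 1)\<rceil> + 2"
  have "m \<ge> 2" and m: "\<gamma> * \<beta> \<le> real m * (\<gamma> - 1)"
    using assms(10) by (auto simp: m_def pos_divide_le_eq[symmetric]) linarith
  obtain B\<^sub>0 B where "B\<^sub>0 \<ge> 0" "B \<ge> 0" and bounded: "\<And>y. norm (f y) \<le> B\<^sub>0"
    and decay: "\<And>y. \<bar>y\<bar> ^ m * norm (f y) \<le> B"
    using schwartz_decay[OF assms(2), of 0] schwartz_decay[OF assms(2), of m] by (metis power_0 mult_1)
  obtain A where "A \<ge> 0" and tail: "\<And>s. s > 0 \<Longrightarrow> prob {\<omega>\<in>space M. s \<le> \<bar>\<xi> 0 \<omega>\<bar>} \<le> A * s powr (-\<alpha>)"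
    using tail_bound_of_char_asymp[OF assms(3) _ assms(6,9)] assms(7) by auto
  then have tails: "prob {\<omega>\<in>space M. s \<le> \<bar>\<xi> x \<omega>\<bar>} \<le> A * s powr (-\<alpha>)" if "s > 0" for x s
    using prob_eq_of_distr_eq[OF assms(3) assms(3) assms(5)[of x], of "{y. s \<le> \<bar>y\<bar>}"] that by simp
  define a where "a = B * (2 powr m / (real m - 1))"
  define b where "b = B\<^sub>0 * A * 2 powr \<alpha> * (2 powr \<alpha> / (\<alpha> - 1))"
  have "a \<ge> 0" "b \<ge> 0"
    using \<open>B \<ge> 0\<close> \<open>B\<^sub>0 \<ge> 0\<close> \<open>A \<ge> 0\<close> \<open>m \<ge> 2\<close> assms(7) by (simp_all add: a_def b_def)
  define E where "E r = (\<integral>\<^sup>+ \<omega>. ennreal (norm (infsum (\<lambda>x::int. f ((real_of_int x + \<xi> x \<omega>) / r))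
                                       {x. \<bar>real_of_int x\<bar> > r powr \<gamma>})) \<partial>M)" for r
  define C where "C = a * 2 ^ m + b"
  have E: "E r \<le> ennreal (C / r powr (\<gamma> * (\<beta> - 1)))" if "r > 0" "r powr \<gamma> > 2" for r
  proof -
    have "r \<ge> 1" using that assms(10) powr_le1[of \<gamma> r] by fastforce
    have "E r \<le> ennreal (a * (2 * r) ^ m * (r powr \<gamma>) powr (1 - real m) + b * (r powr \<gamma>) powr (1 - \<alpha>))"
      using nn_integral_norm_tail_sum_le[OF assms(3) _ bounded decay \<open>m \<ge> 2\<close> tails assms(7) \<open>r > 0\<close>] that
      by (simp add: E_def a_def b_def)
    also have "\<dots> \<le> ennreal (C / r powr (\<gamma> * (\<beta> - 1)))"
      unfolding C_def using \<open>r \<ge> 1\<close> assms(10,12) m \<open>a \<ge> 0\<close> \<open>b \<ge> 0\<close>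
      by (intro ennreal_leI powr_tail_terms_le) auto
    finally show ?thesis .
  qed
  show ?thesis
  proof (intro exI[of _ C] allI impI, fold E_def)
    fix r :: real assume "r > 0" "r powr \<gamma> > 2"
    then have "ennreal (r powr ((\<alpha> - 1) / \<alpha>)) * E r
        \<le> ennreal (r powr ((\<alpha> - 1) / \<alpha>)) * ennreal (C / r powr (\<gamma> * (\<beta> - 1)))"
      by (intro mult_left_mono E) auto
    then show "ennreal (r powr ((\<alpha> - 1) / \<alpha>)) * E r
        \<le> ennreal (C * r powr ((\<alpha> - 1) / \<alpha>) / r powr (\<gamma> * (\<beta> - 1)))"
      by (simp add: ennreal_mult'[symmetric] mult.commute)
  qed
qed

end
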